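(* Let $\mathcal{L}$ be a finite algebraic language, $\mathcal{V}$ an equational class of $\mathcal{L}$-algebras, $\Sigma$ a finite set of $\mathcal{L}$-identities and $X\supseteq\mathrm{Var}(\Sigma)$ a finite set of variables. Consider the condition $(\star)$: whenever $\Sigma\Rightarrow\Delta$ is $\mathcal{V}$-admissible with $\mathrm{Var}(\Delta)\subseteq X$, there exists $\varphi\approx\psi\in\Delta$ such that $\Sigma\Rightarrow\{\varphi\approx\psi\}$ is $\mathcal{V}$-admissible. If $\mathrm{type}(\mathsf{E}_{\mathcal{V}}(\Sigma,X))=1$, then $\Sigma$ satisfies $(\star)$. Conversely, if $\mathrm{type}(\mathsf{E}_{\mathcal{V}}(\Sigma,X))\in\{1,\omega\}$ and $\Sigma$ satisfies $(\star)$, then $\mathrm{type}(\mathsf{E}_{\mathcal{V}}(\Sigma,X))=1$.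
   Context: $\mathbf{Fm}_{\mathcal{L}}(Y)$ is the formula algebra over variables $Y$ ($\omega$ = all variables); $\mathrm{Var}(\Gamma)$ is the set of variables occurring in $\Gamma$; substitutions are homomorphisms of formula algebras. A clause $\Sigma\Rightarrow\Delta$ is a pair of finite sets of identities; a substitution $\sigma\colon\mathbf{Fm}_{\mathcal{L}}(X)\to\mathbf{Fm}_{\mathcal{L}}(\omega)$ is a $\mathcal{V}$-unifier of $\Gamma$ (with $\mathrm{Var}(\Gamma)\subseteq X$) if $\mathcal{V}\models\sigma(\varphi)\approx\sigma(\psi)$ for all $\varphi\approx\psi\in\Gamma$; $\Sigma\Rightarrow\Delta$ is $\mathcal{V}$-admissible if every substitution $\sigma\colon\mathbf{Fm}_{\mathcal{L}}(\mathrm{Var}(\Sigma\cup\Delta))\to\mathbf{Fm}_{\mathcal{L}}(\omega)$ that $\mathcal{V}$-unifies $\Sigma$ also $\mathcal{V}$-unifies some member of $\Delta$. $h_{\mathcal{V}}$ is the canonical homomorphism from $\mathbf{Fm}_{\mathcal{L}}(Y)$ onto the free algebra $\mathbf{F}_{\mathcal{V}}(Y)$. For substitutions over $X$, $\sigma_2\sqsubseteq_{\mathcal{V}}\sigma_1$ iff $\ker(h_{\mathcal{V}}\circ\sigma_1)\subseteq\ker(h_{\mathcal{V}}\circ\sigma_2)$; $\mathsf{E}_{\mathcal{V}}(\Sigma,X)$ is the set of $\mathcal{V}$-unifiers of $\Sigma$ over $X$ preordered by $\sqsubseteq_{\mathcal{V}}$. Types of a preordered set $(P,\le)$: a complete set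 is $M\subseteq P$ with every $x\in P$ below some $y\in M$; a $\mu$-set is a complete set whose distinct elements are pairwise incomparable; all $\mu$-sets have the same cardinality. The type is $0$ (nullary) if there is no $\mu$-set, $\infty$ (infinitary) if there is an infinite $\mu$-set, $\omega$ (finitary) if there is a finite $\mu$-set of cardinality $>1$, and $1$ (unitary) if there is a $\mu$-set of cardinality $1$; types are ordered $1<\omega<\infty<0$. (Type is considered for nonempty preordered sets.) *)

theory Defs
  imports Main
begin

text \<open>A language is a set F of operation symbols with an arity function ar.
Variables are natural numbers (omega = all variables).\<close>

datatype ('f, 'v) trm = Var 'v | Fun 'f "('f, 'v) trm list"

type_synonym 'f fm = "('f, nat) trm"
type_synonym 'f ident = "'f fm \<times> 'f fm"

fun wf_trm :: "'f set \<Rightarrow> ('f \<Rightarrow> nat) \<Rightarrow> ('f, 'v) trm \<Rightarrow> bool" where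
  "wf_trm F ar (Var x) = True"
| "wf_trm F ar (Fun f ts) = (f \<in> F \<and> length ts = ar f \<and> (\<forall>t \<in> set ts. wf_trm F ar t))"

fun vars_trm :: "('f, 'v) trm \<Rightarrow> 'v set" where
  "vars_trm (Var x) = {x}"
| "vars_trm (Fun f ts) = (\<Union>t \<in> set ts. vars_trm t)"

definition wf_ident :: "'f set \<Rightarrow> ('f \<Rightarrow> nat) \<Rightarrow> 'f ident \<Rightarrow> bool" where
  "wf_ident F ar e = (wf_trm F ar (fst e) \<and> wf_trm F ar (snd e))"

definition vars_ident :: "'f ident \<Rightarrow> nat set" where
  "vars_ident e = vars_trm (fst e) \<union> vars_trm (snd e)"

definition Var_set :: "'f ident set \<Rightarrow> nat set" where
  "Var_set \<Gamma> = (\<Union>e \<in> \<Gamma>. vars_ident e)"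

fun subst :: "(nat \<Rightarrow> 'f fm) \<Rightarrow> 'f fm \<Rightarrow> 'f fm" where
  "subst \<sigma> (Var x) = \<sigma> x"
| "subst \<sigma> (Fun f ts) = Fun f (map (subst \<sigma>) ts)"

fun eval :: "('f \<Rightarrow> 'a list \<Rightarrow> 'a) \<Rightarrow> ('v \<Rightarrow> 'a) \<Rightarrow> ('f, 'v) trm \<Rightarrow> 'a" where
  "eval I \<alpha> (Var x) = \<alpha> x"
| "eval I \<alpha> (Fun f ts) = I f (map (eval I \<alpha>) ts)"

definition is_algebra :: "'f set \<Rightarrow> ('f \<Rightarrow> nat) \<Rightarrow> 'a set \<Rightarrow> ('f \<Rightarrow> 'a list \<Rightarrow> 'a) \<Rightarrow> bool" where
  "is_algebra F ar A I = (A \<noteq> {} \<and>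
     (\<forall>f \<in> F. \<forall>xs. length xs = ar f \<and> set xs \<subseteq> A \<longrightarrow> I f xs \<in> A))"

definition satisfies :: "'a set \<Rightarrow> ('f \<Rightarrow> 'a list \<Rightarrow> 'a) \<Rightarrow> 'f ident \<Rightarrow> bool" where
  "satisfies A I e = (\<forall>\<alpha>. (\<forall>x. \<alpha> x \<in> A) \<longrightarrow> eval I \<alpha> (fst e) = eval I \<alpha> (snd e))"

text \<open>The equational class V is presented as Mod(E) for a set E of identities.  Algebras are taken
with carriers inside the (countable) type of formulas, which is large enough to contain
copies of all free algebras of V, so this is equivalent to validity in all of Mod(E).\<close>

definition V_valid :: "'f set \<Rightarrow> ('f \<Rightarrow> nat) \<Rightarrow> 'f ident set \<Rightarrow> 'f ident \<Rightarrow> bool" where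
  "V_valid F ar E e = (\<forall>(A :: 'f fm set) I. is_algebra F ar A I \<and> (\<forall>d \<in> E. satisfies A I d)
      \<longrightarrow> satisfies A I e)"

definition wf_subst_on :: "'f set \<Rightarrow> ('f \<Rightarrow> nat) \<Rightarrow> nat set \<Rightarrow> (nat \<Rightarrow> 'f fm) \<Rightarrow> bool" where
  "wf_subst_on F ar Y \<sigma> = (\<forall>x \<in> Y. wf_trm F ar (\<sigma> x))"

definition V_unifies :: "'f set \<Rightarrow> ('f \<Rightarrow> nat) \<Rightarrow> 'f ident set \<Rightarrow> (nat \<Rightarrow> 'f fm) \<Rightarrow> 'f ident set \<Rightarrow> bool" where
  "V_unifies F ar E \<sigma> \<Gamma> = (\<forall>(s, t) \<in> \<Gamma>. V_valid F ar E (subst \<sigma> s, subst \<sigma> t))"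

definition admissible :: "'f set \<Rightarrow> ('f \<Rightarrow> nat) \<Rightarrow> 'f ident set \<Rightarrow> 'f ident set \<Rightarrow> 'f ident set \<Rightarrow> bool" where
  "admissible F ar E Sig Delta = (\<forall>\<sigma>. wf_subst_on F ar (Var_set (Sig \<union> Delta)) \<sigma> \<and> V_unifies F ar E \<sigma> Sig
      \<longrightarrow> (\<exists>e \<in> Delta. V_unifies F ar E \<sigma> {e}))"

text \<open>Substitutions Fm(X) -> Fm(omega) are represented by functions that are the identity
outside X.\<close>
definition subst_over :: "'f set \<Rightarrow> ('f \<Rightarrow> nat) \<Rightarrow> nat set \<Rightarrow> (nat \<Rightarrow> 'f fm) \<Rightarrow> bool" where
  "subst_over F ar X \<sigma> = (wf_subst_on F ar X \<sigma> \<and> (\<forall>x. x \<notin> X \<longrightarrow> \<sigma> x = Var x))"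

definition E_V :: "'f set \<Rightarrow> ('f \<Rightarrow> nat) \<Rightarrow> 'f ident set \<Rightarrow> 'f ident set \<Rightarrow> nat set \<Rightarrow> (nat \<Rightarrow> 'f fm) set" where
  "E_V F ar E Sig X = {\<sigma>. subst_over F ar X \<sigma> \<and> V_unifies F ar E \<sigma> Sig}"

text \<open>sigma2 below sigma1 iff ker(h_V o sigma1) is contained in ker(h_V o sigma2),
kernels taken on Fm(X).\<close>
definition less_general :: "'f set \<Rightarrow> ('f \<Rightarrow> nat) \<Rightarrow> 'f ident set \<Rightarrow> nat set
    \<Rightarrow> (nat \<Rightarrow> 'f fm) \<Rightarrow> (nat \<Rightarrow> 'f fm) \<Rightarrow> bool" where
  "less_general F ar E X \<sigma>2 \<sigma>1 = (\<forall>s t. wf_trm F ar s \<and> wf_trm F ar t \<and>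
      vars_trm s \<subseteq> X \<and> vars_trm t \<subseteq> X \<and> V_valid F ar E (subst \<sigma>1 s, subst \<sigma>1 t)
      \<longrightarrow> V_valid F ar E (subst \<sigma>2 s, subst \<sigma>2 t))"

definition complete_set :: "'a set \<Rightarrow> ('a \<Rightarrow> 'a \<Rightarrow> bool) \<Rightarrow> 'a set \<Rightarrow> bool" where
  "complete_set P le M = (M \<subseteq> P \<and> (\<forall>x \<in> P. \<exists>y \<in> M. le x y))"

definition mu_set :: "'a set \<Rightarrow> ('a \<Rightarrow> 'a \<Rightarrow> bool) \<Rightarrow> 'a set \<Rightarrow> bool" where
  "mu_set P le M = (complete_set P le M \<and>
     (\<forall>x \<in> M. \<forall>y \<in> M. x \<noteq> y \<longrightarrow> \<not> le x y \<and> \<not> le y x))"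

datatype unif_type = Unitary | Finitary | Infinitary | Nullary

text \<open>Type 1 / omega / infinity / 0 (all mu-sets have the same cardinality).  The empty
preordered set (for which the paper does not define a type) gets Nullary here.\<close>
definition ptype :: "'a set \<Rightarrow> ('a \<Rightarrow> 'a \<Rightarrow> bool) \<Rightarrow> unif_type" where
  "ptype P le =
    (if \<exists>M. mu_set P le M \<and> finite M \<and> card M = 1 then Unitary
     else if \<exists>M. mu_set P le M \<and> finite M \<and> card M > 1 then Finitary
     else if \<exists>M. mu_set P le M \<and> infinite M then Infinitary
     else Nullary)"

definition star_cond :: "'f set \<Rightarrow> ('f \<Rightarrow> nat) \<Rightarrow> 'f ident set \<Rightarrow> 'f ident set \<Rightarrow> nat set \<Rightarrow> bool" where
  "star_cond F ar E Sig X = (\<forall>Delta. finite Delta \<and> (\<forall>e \<in> Delta. wf_ident F ar e) \<and>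
      Var_set Delta \<subseteq> X \<and> admissible F ar E Sig Delta
      \<longrightarrow> (\<exists>e \<in> Delta. admissible F ar E Sig {e}))"

end

theory Submission
  imports Defs
begin

text \<open>Restricting a substitution to a set of variables between \<open>Var(\<Sigma>)\<close> and \<open>X\<close> turns any
\<open>\<V>\<close>-unifier of \<open>\<Sigma>\<close> into an element of \<open>E\<^sub>\<V>(\<Sigma>,X)\<close> without changing its action on
identities over \<open>X\<close>, so a clause \<open>\<Sigma> \<Rightarrow> \<Delta>\<close> over \<open>X\<close> is admissible iff every element of
\<open>E\<^sub>\<V>(\<Sigma>,X)\<close> unifies a member of \<open>\<Delta>\<close>; and \<open>\<tau> \<sqsubseteq> \<sigma>\<close> says exactly that \<open>\<tau>\<close> unifies every
identity over \<open>X\<close> that \<open>\<sigma>\<close> unifies.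
If \<open>\<sigma>\<^sub>0\<close> is a most general unifier, it unifies some member of an admissible \<open>\<Delta>\<close>, and then so
does every unifier below it, which gives \<open>(\<star>)\<close>.  If instead \<open>M\<close> is a finite \<open>\<mu>\<close>-set with at
least two elements, choose for each \<open>\<sigma> \<in> M\<close> another \<open>\<sigma>' \<in> M\<close> and an identity \<open>d \<sigma>\<close> unified
by \<open>\<sigma>\<close> but not by \<open>\<sigma>'\<close>.  The clause \<open>\<Sigma> \<Rightarrow> d ` M\<close> is admissible because \<open>M\<close> is complete,
but no single \<open>\<Sigma> \<Rightarrow> {d \<sigma>}\<close> is, as \<open>\<sigma>'\<close> witnesses; so \<open>(\<star>)\<close> fails.\<close>

lemma subst_cong: "(\<And>x. x \<in> vars_trm t \<Longrightarrow> \<sigma> x = \<tau> x) \<Longrightarrow> subst \<sigma> t = subst \<tau> t"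
  by (induction t) auto

lemma Var_set_Un: "Var_set (A \<union> B) = Var_set A \<union> Var_set B"
  unfolding Var_set_def by auto

lemma Var_set_subset_iff: "Var_set Delta \<subseteq> X \<longleftrightarrow> (\<forall>e \<in> Delta. vars_ident e \<subseteq> X)"
  unfolding Var_set_def by auto

lemma V_unifies_singleton:
  "V_unifies F ar E \<sigma> {e} = V_valid F ar E (subst \<sigma> (fst e), subst \<sigma> (snd e))"
  unfolding V_unifies_def by (cases e) simp

definition restrict_subst :: "nat set \<Rightarrow> (nat \<Rightarrow> 'f fm) \<Rightarrow> nat \<Rightarrow> 'f fm" where
  "restrict_subst Y \<sigma> = (\<lambda>x. if x \<in> Y then \<sigma> x else Var x)"

lemma V_unifies_restrict_subst:
  assumes "Var_set \<Gamma> \<subseteq> Y"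
  shows "V_unifies F ar E (restrict_subst Y \<sigma>) \<Gamma> = V_unifies F ar E \<sigma> \<Gamma>"
proof -
  have "subst (restrict_subst Y \<sigma>) s = subst \<sigma> s" if "vars_trm s \<subseteq> Y" for s
    using that by (intro subst_cong) (auto simp: restrict_subst_def)
  moreover have "vars_trm s \<subseteq> Y \<and> vars_trm t \<subseteq> Y" if "(s, t) \<in> \<Gamma>" for s t
    using that assms unfolding Var_set_def vars_ident_def by force
  ultimately show ?thesis
    unfolding V_unifies_def by auto
qed

lemma restrict_subst_in_E_V:
  assumes "Var_set Sig \<subseteq> Y" "Y \<subseteq> X" "wf_subst_on F ar Y \<sigma>" "V_unifies F ar E \<sigma> Sig"
  shows "restrict_subst Y \<sigma> \<in> E_V F ar E Sig X"
  using assms V_unifies_restrict_subst[OF assms(1)]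
  unfolding E_V_def subst_over_def wf_subst_on_def restrict_subst_def by auto

lemma admissible_iff_E_V:
  assumes "Var_set Sig \<subseteq> X" "Var_set Delta \<subseteq> X"
  shows "admissible F ar E Sig Delta \<longleftrightarrow>
    (\<forall>\<tau> \<in> E_V F ar E Sig X. \<exists>e \<in> Delta. V_unifies F ar E \<tau> {e})"
proof
  assume adm: "admissible F ar E Sig Delta"
  show "\<forall>\<tau> \<in> E_V F ar E Sig X. \<exists>e \<in> Delta. V_unifies F ar E \<tau> {e}"
  proof
    fix \<tau> assume "\<tau> \<in> E_V F ar E Sig X"
    then have "wf_subst_on F ar (Var_set (Sig \<union> Delta)) \<tau>" "V_unifies F ar E \<tau> Sig"
      using assms unfolding E_V_def subst_over_def wf_subst_on_def Var_set_Un by auto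
    then show "\<exists>e \<in> Delta. V_unifies F ar E \<tau> {e}"
      using adm unfolding admissible_def by blast
  qed
next
  assume unif: "\<forall>\<tau> \<in> E_V F ar E Sig X. \<exists>e \<in> Delta. V_unifies F ar E \<tau> {e}"
  show "admissible F ar E Sig Delta"
    unfolding admissible_def
  proof (intro allI impI)
    fix \<sigma>
    let ?Y = "Var_set (Sig \<union> Delta)"
    assume "wf_subst_on F ar ?Y \<sigma> \<and> V_unifies F ar E \<sigma> Sig"
    then have "restrict_subst ?Y \<sigma> \<in> E_V F ar E Sig X"
      using assms by (intro restrict_subst_in_E_V) (auto simp: Var_set_Un)
    then obtain e where "e \<in> Delta" "V_unifies F ar E (restrict_subst ?Y \<sigma>) {e}"
      using unif by blast
    moreover have "Var_set {e} \<subseteq> ?Y"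
      using \<open>e \<in> Delta\<close> unfolding Var_set_def by auto
    ultimately show "\<exists>e \<in> Delta. V_unifies F ar E \<sigma> {e}"
      using V_unifies_restrict_subst by blast
  qed
qed

lemma less_general_iff:
  "less_general F ar E X \<tau> \<sigma> \<longleftrightarrow>
    (\<forall>e. wf_ident F ar e \<and> vars_ident e \<subseteq> X \<and> V_unifies F ar E \<sigma> {e} \<longrightarrow> V_unifies F ar E \<tau> {e})"
  unfolding less_general_def wf_ident_def vars_ident_def V_unifies_singleton by auto

lemma star_cond_if_most_general:
  assumes "Var_set Sig \<subseteq> X"
    and mgu: "\<sigma>\<^sub>0 \<in> E_V F ar E Sig X" "\<forall>\<tau> \<in> E_V F ar E Sig X. less_general F ar E X \<tau> \<sigma>\<^sub>0"
  shows "star_cond F ar E Sig X"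
  unfolding star_cond_def
proof (intro allI impI)
  fix Delta
  assume Delta: "finite Delta \<and> (\<forall>e \<in> Delta. wf_ident F ar e) \<and> Var_set Delta \<subseteq> X
    \<and> admissible F ar E Sig Delta"
  then obtain e where e: "e \<in> Delta" "V_unifies F ar E \<sigma>\<^sub>0 {e}"
    using admissible_iff_E_V[OF assms(1)] mgu(1) by blast
  have "wf_ident F ar e" "vars_ident e \<subseteq> X"
    using Delta e(1) unfolding Var_set_subset_iff by auto
  then have "\<forall>\<tau> \<in> E_V F ar E Sig X. V_unifies F ar E \<tau> {e}"
    using mgu(2) e(2) less_general_iff by blast
  moreover have "Var_set {e} \<subseteq> X"
    using \<open>vars_ident e \<subseteq> X\<close> Var_set_subset_iff by blast
  ultimately show "\<exists>e \<in> Delta. admissible F ar E Sig {e}"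
    using e(1) admissible_iff_E_V[OF assms(1)] by blast
qed

lemma not_star_cond_if_finite_mu_set:
  assumes "Var_set Sig \<subseteq> X"
    and M: "mu_set (E_V F ar E Sig X) (less_general F ar E X) M" "finite M" "card M > 1"
  shows "\<not> star_cond F ar E Sig X"
proof
  assume star: "star_cond F ar E Sig X"
  let ?P = "E_V F ar E Sig X" and ?le = "less_general F ar E X"
  have MP: "M \<subseteq> ?P" and complete: "\<forall>\<tau> \<in> ?P. \<exists>\<sigma> \<in> M. ?le \<tau> \<sigma>"
    using M(1) unfolding mu_set_def complete_set_def by auto
  have "\<exists>\<sigma>' e. \<sigma>' \<in> M \<and> wf_ident F ar e \<and> vars_ident e \<subseteq> X
      \<and> V_unifies F ar E \<sigma> {e} \<and> \<not> V_unifies F ar E \<sigma>' {e}" if "\<sigma> \<in> M" for \<sigma>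
  proof -
    have "M \<noteq> {\<sigma>}"
      using M(3) by auto
    then obtain \<sigma>' where "\<sigma>' \<in> M" "\<sigma>' \<noteq> \<sigma>"
      using \<open>\<sigma> \<in> M\<close> by blast
    then have "\<not> ?le \<sigma>' \<sigma>"
      using M(1) \<open>\<sigma> \<in> M\<close> unfolding mu_set_def by blast
    then show ?thesis
      using \<open>\<sigma>' \<in> M\<close> unfolding less_general_iff by blast
  qed
  then obtain \<sigma>' d where d: "\<forall>\<sigma> \<in> M. \<sigma>' \<sigma> \<in> M \<and> wf_ident F ar (d \<sigma>) \<and> vars_ident (d \<sigma>) \<subseteq> X
      \<and> V_unifies F ar E \<sigma> {d \<sigma>} \<and> \<not> V_unifies F ar E (\<sigma>' \<sigma>) {d \<sigma>}"
    by metis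
  have vars_dM: "Var_set (d ` M) \<subseteq> X"
    using d unfolding Var_set_subset_iff by blast
  have "\<exists>e \<in> d ` M. V_unifies F ar E \<tau> {e}" if "\<tau> \<in> ?P" for \<tau>
  proof -
    obtain \<sigma> where "\<sigma> \<in> M" "?le \<tau> \<sigma>"
      using complete \<open>\<tau> \<in> ?P\<close> by blast
    then show ?thesis
      using d unfolding less_general_iff by blast
  qed
  then have "admissible F ar E Sig (d ` M)"
    using admissible_iff_E_V[OF assms(1) vars_dM] by blast
  moreover have "finite (d ` M)" "\<forall>e \<in> d ` M. wf_ident F ar e"
    using M(2) d by auto
  ultimately obtain \<sigma> where \<sigma>: "\<sigma> \<in> M" "admissible F ar E Sig {d \<sigma>}"
    using star vars_dM unfolding star_cond_def by blast
  have "Var_set {d \<sigma>} \<subseteq> X"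
    using d \<sigma>(1) unfolding Var_set_subset_iff by blast
  then have "V_unifies F ar E (\<sigma>' \<sigma>) {d \<sigma>}"
    using \<sigma> d MP admissible_iff_E_V[OF assms(1), of "{d \<sigma>}"] by blast
  then show False
    using d \<sigma>(1) by blast
qed

theorem proposition3p4:
  fixes F :: "'f set" and ar :: "'f \<Rightarrow> nat" and E :: "'f ident set"
    and Sig :: "'f ident set" and X :: "nat set"
  assumes "finite F"
    and "\<forall>e \<in> E. wf_ident F ar e"
    and "finite Sig" and "\<forall>e \<in> Sig. wf_ident F ar e"
    and "finite X" and "Var_set Sig \<subseteq> X"
  shows "(ptype (E_V F ar E Sig X) (less_general F ar E X) = Unitary \<longrightarrow> star_cond F ar E Sig X)
       \<and> (ptype (E_V F ar E Sig X) (less_general F ar E X) \<in> {Unitary, Finitary}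
           \<and> star_cond F ar E Sig X
           \<longrightarrow> ptype (E_V F ar E Sig X) (less_general F ar E X) = Unitary)"
proof (intro conjI impI)
  let ?P = "E_V F ar E Sig X" and ?le = "less_general F ar E X"
  assume "ptype ?P ?le = Unitary"
  then obtain M where "mu_set ?P ?le M" "card M = 1"
    unfolding ptype_def by (auto split: if_splits)
  then obtain \<sigma>\<^sub>0 where "\<sigma>\<^sub>0 \<in> ?P" "\<forall>\<tau> \<in> ?P. ?le \<tau> \<sigma>\<^sub>0"
    unfolding mu_set_def complete_set_def by (auto simp: card_1_singleton_iff)
  then show "star_cond F ar E Sig X"
    using star_cond_if_most_general[OF assms(6)] by blast
next
  let ?P = "E_V F ar E Sig X" and ?le = "less_general F ar E X"
  assume "ptype ?P ?le \<in> {Unitary, Finitary} \<and> star_cond F ar E Sig X"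
  then show "ptype ?P ?le = Unitary"
    using not_star_cond_if_finite_mu_set[OF assms(6)]
    unfolding ptype_def by (auto split: if_splits)
qed

end
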